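(* Consider the twisted associative algebra generated by an element $\Delta$ of arity $0$ and homological degree $1$, an element $\mathsf m$ of arity $1$ and homological degree $0$, and an element $\mathsf l$ of arity $1$ and homological degree $1$, subject to the relations \[ \Delta^2=0,\quad [\mathsf m_{\{1\}},\mathsf m_{\{2\}}]=0,\quad [\Delta,\mathsf m_{\{1\}}]=\mathsf l_{\{1\}},\quad [\Delta,\mathsf l_{\{1\}}]=0,\quad [\mathsf l_{\{1\}},\mathsf m_{\{2\}}]=0,\quad [\mathsf l_{\{1\}},\mathsf l_{\{2\}}]=0. \] This twisted associative algebra is isomorphic to $\mathrm{tBV}$, the twisted associative algebra generated by $\Delta$ (arity $0$, degree $1$) and $\mathsf m$ (arity $1$, degree $0$) subject to $\Delta^2=0$, $[\mathsf m_{\{1\}},\mathsf m_{\{2\}}]=0$ and $[[\Delta,\mathsf m_{\{1\}}],\mathsf m_{\{2\}}]=0$.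
   Context: Work over a field $\Bbbk$ of characteristic zero, homologically graded vector spaces with the Koszul sign rule. A twisted associative algebra is a species $\mathcal A$ (functor from finite sets with bijections to graded vector spaces) with natural, associative, unital products $\mathcal A(J)\otimes\mathcal A(K)\to\mathcal A(J\sqcup K)$ for disjoint $J,K$; elements of $\mathcal A(I)$ have arity $|I|$. $[\mathsf x,\mathsf y]=\mathsf x\mathsf y-(-1)^{|\mathsf x||\mathsf y|}\mathsf y\mathsf x$. For an arity-one element $\mathsf x$, $\mathsf x_{\{i\}}$ is its relabeling to $\{i\}$. Relations are imposed together with all relabelings. *)

theory Defs
  imports Main
begin

text \<open>Concrete model of twisted associative algebras presented by generators of
arity 0 and 1.  Labels are natural numbers (finite subsets of nat model the finite
sets; bijections of nat model relabelings).  A basis word of arity I of the free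
twisted associative algebra is a list of letters in which every label of I occurs
exactly once.  Elements are finitely supported coefficient functions on words.\<close>

datatype letter = LD | LM nat | LL nat
  \<comment> \<open>LD = Delta (arity 0, degree 1); LM i = m relabelled to {i} (degree 0);
      LL i = l relabelled to {i} (degree 1)\<close>

type_synonym word = "letter list"
type_synonym 'k elt = "word \<Rightarrow> 'k"

fun lab :: "letter \<Rightarrow> nat list" where
  "lab LD = []" | "lab (LM i) = [i]" | "lab (LL i) = [i]"

fun ldeg :: "letter \<Rightarrow> nat" where
  "ldeg LD = 1" | "ldeg (LM i) = 0" | "ldeg (LL i) = 1"

fun relab_letter :: "(nat \<Rightarrow> nat) \<Rightarrow> letter \<Rightarrow> letter" where
  "relab_letter s LD = LD" | "relab_letter s (LM i) = LM (s i)" | "relab_letter s (LL i) = LL (s i)"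

definition labels :: "word \<Rightarrow> nat list" where
  "labels w = concat (map lab w)"

definition wdeg :: "word \<Rightarrow> nat" where
  "wdeg w = sum_list (map ldeg w)"

definition alph1 :: "letter set" where "alph1 = UNIV"
definition alph2 :: "letter set" where "alph2 = insert LD (range LM)"

text \<open>f is an element of A(I) of the free twisted associative algebra on alph\<close>
definition inA :: "letter set \<Rightarrow> nat set \<Rightarrow> 'k::zero elt \<Rightarrow> bool" where
  "inA alph I f \<longleftrightarrow> finite {w. f w \<noteq> 0} \<and>
     (\<forall>w. f w \<noteq> 0 \<longrightarrow> set w \<subseteq> alph \<and> distinct (labels w) \<and> set (labels w) = I)"

definition homdeg :: "nat \<Rightarrow> 'k::zero elt \<Rightarrow> bool" where
  "homdeg d f \<longleftrightarrow> (\<forall>w. f w \<noteq> 0 \<longrightarrow> wdeg w = d)"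

definition mon :: "word \<Rightarrow> 'k::field elt" where
  "mon u = (\<lambda>w. if w = u then 1 else 0)"

definition eadd :: "'k::field elt \<Rightarrow> 'k elt \<Rightarrow> 'k elt" where
  "eadd f g = (\<lambda>w. f w + g w)"

definition esub :: "'k::field elt \<Rightarrow> 'k elt \<Rightarrow> 'k elt" where
  "esub f g = (\<lambda>w. f w - g w)"

definition esmult :: "'k::field \<Rightarrow> 'k elt \<Rightarrow> 'k elt" where
  "esmult c f = (\<lambda>w. c * f w)"

text \<open>product = concatenation of words, extended bilinearly\<close>
definition emult :: "'k::field elt \<Rightarrow> 'k elt \<Rightarrow> 'k elt" where
  "emult f g = (\<lambda>w. \<Sum>k\<le>length w. f (take k w) * g (drop k w))"

definition relabel :: "(nat \<Rightarrow> nat) \<Rightarrow> 'k::field elt \<Rightarrow> 'k elt" where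
  "relabel s f = (\<lambda>w. f (map (relab_letter (inv s)) w))"

definition gcomm :: "'k::field elt \<Rightarrow> nat \<Rightarrow> 'k elt \<Rightarrow> nat \<Rightarrow> 'k elt" where
  "gcomm a da b db = esub (emult a b) (esmult ((-1) ^ (da * db)) (emult b a))"

text \<open>Relations, paired with their arity sets, together with all relabelings.\<close>
definition Rel1 :: "('k::field elt \<times> nat set) set" where
  "Rel1 =
     {(mon [LD, LD], {})}
   \<union> {(gcomm (mon [LM i]) 0 (mon [LM j]) 0, {i, j}) | i j. i \<noteq> j}
   \<union> {(esub (gcomm (mon [LD]) 1 (mon [LM i]) 0) (mon [LL i]), {i}) | i. True}
   \<union> {(gcomm (mon [LD]) 1 (mon [LL i]) 1, {i}) | i. True}
   \<union> {(gcomm (mon [LL i]) 1 (mon [LM j]) 0, {i, j}) | i j. i \<noteq> j}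
   \<union> {(gcomm (mon [LL i]) 1 (mon [LL j]) 1, {i, j}) | i j. i \<noteq> j}"

definition Rel2 :: "('k::field elt \<times> nat set) set" where
  "Rel2 =
     {(mon [LD, LD], {})}
   \<union> {(gcomm (mon [LM i]) 0 (mon [LM j]) 0, {i, j}) | i j. i \<noteq> j}
   \<union> {(gcomm (gcomm (mon [LD]) 1 (mon [LM i]) 0) 1 (mon [LM j]) 0, {i, j}) | i j. i \<noteq> j}"

inductive inIdeal :: "letter set \<Rightarrow> ('k::field elt \<times> nat set) set \<Rightarrow> 'k elt \<Rightarrow> bool"
  for alph R where
  zero: "inIdeal alph R (\<lambda>w. 0)"
| add: "inIdeal alph R x \<Longrightarrow> inIdeal alph R y \<Longrightarrow> inIdeal alph R (eadd x y)"
| smult: "inIdeal alph R x \<Longrightarrow> inIdeal alph R (esmult c x)"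
| gen: "(r, S) \<in> R \<Longrightarrow> set u \<subseteq> alph \<Longrightarrow> set v \<subseteq> alph \<Longrightarrow>
        distinct (labels u @ labels v) \<Longrightarrow> set (labels u @ labels v) \<inter> S = {} \<Longrightarrow>
        inIdeal alph R (emult (emult (mon u) r) (mon v))"

definition taa_morphism :: "letter set \<Rightarrow> letter set \<Rightarrow> ('k::field elt \<Rightarrow> 'k elt) \<Rightarrow> bool" where
  "taa_morphism A B F \<longleftrightarrow>
     (\<forall>I f. finite I \<longrightarrow> inA A I f \<longrightarrow> inA B I (F f))
   \<and> (\<forall>I f g. inA A I f \<longrightarrow> inA A I g \<longrightarrow> F (eadd f g) = eadd (F f) (F g))
   \<and> (\<forall>I c f. inA A I f \<longrightarrow> F (esmult c f) = esmult c (F f))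
   \<and> (\<forall>I J f g. I \<inter> J = {} \<longrightarrow> inA A I f \<longrightarrow> inA A J g \<longrightarrow> F (emult f g) = emult (F f) (F g))
   \<and> F (mon []) = mon []
   \<and> (\<forall>s I f. bij s \<longrightarrow> inA A I f \<longrightarrow> F (relabel s f) = relabel s (F f))
   \<and> (\<forall>I d f. inA A I f \<longrightarrow> homdeg d f \<longrightarrow> homdeg d (F f))"

text \<open>The quotients Free(A)/Ideal(R) and Free(B)/Ideal(S) are isomorphic twisted associative
  algebras: there are morphisms between the free algebras preserving the ideals whose
  composites are the identity modulo the ideals.\<close>
definition taa_quot_iso :: "letter set \<Rightarrow> ('k::field elt \<times> nat set) set \<Rightarrow>
    letter set \<Rightarrow> ('k elt \<times> nat set) set \<Rightarrow> bool" where
  "taa_quot_iso A R B S \<longleftrightarrow> (\<exists>F G.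
     taa_morphism A B F \<and> taa_morphism B A G
   \<and> (\<forall>I x. finite I \<longrightarrow> inA A I x \<longrightarrow> inIdeal A R x \<longrightarrow> inIdeal B S (F x))
   \<and> (\<forall>I y. finite I \<longrightarrow> inA B I y \<longrightarrow> inIdeal B S y \<longrightarrow> inIdeal A R (G y))
   \<and> (\<forall>I x. finite I \<longrightarrow> inA A I x \<longrightarrow> inIdeal A R (esub (G (F x)) x))
   \<and> (\<forall>I y. finite I \<longrightarrow> inA B I y \<longrightarrow> inIdeal B S (esub (F (G y)) y)))"

end

theory Submission
  imports Defs
begin

text \<open>Modulo the relation \<open>l = [\<Delta>, m]\<close> the generator \<open>l\<close> is redundant, so the substitution
  \<open>l \<mapsto> [\<Delta>, m]\<close> and the inclusion of the free algebra on \<open>\<Delta>, m\<close> are inverse to each other modulo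
  the ideals, once each is shown to carry relations into the other ideal.  The inclusion does so
  because \<open>[[\<Delta>, m\<^sub>i], m\<^sub>j] = [l\<^sub>i, m\<^sub>j] + [[\<Delta>, m\<^sub>i] - l\<^sub>i, m\<^sub>j]\<close>.  The substitution kills
  \<open>[\<Delta>, m] - l\<close>, sends \<open>[l\<^sub>i, m\<^sub>j]\<close> to the tBV relation \<open>[[\<Delta>, m\<^sub>i], m\<^sub>j]\<close>, and sends
  \<open>[\<Delta>, l]\<close> and \<open>[l\<^sub>i, l\<^sub>j]\<close> into the tBV ideal by identities of the free algebra:
  \<open>[\<Delta>, [\<Delta>, m]] = \<Delta>\<^sup>2m - m\<Delta>\<^sup>2\<close>, and \<open>[[\<Delta>, m\<^sub>i], [\<Delta>, m\<^sub>j]] = -\<Delta>T - T\<Delta>\<close> with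
  \<open>T = [[\<Delta>, m\<^sub>i], m\<^sub>j]\<close>, up to four terms containing \<open>\<Delta>\<^sup>2\<close>.\<close>

section \<open>The free twisted associative algebra\<close>

definition supp :: "'k::zero elt \<Rightarrow> word set" where
  "supp f = {w. f w \<noteq> 0}"

definition splits :: "word \<Rightarrow> (word \<times> word) set" where
  "splits w = {(a, b). a @ b = w}"

lemma splits_eq_image: "splits w = (\<lambda>k. (take k w, drop k w)) ` {..length w}"
proof (rule set_eqI, rule iffI)
  fix p assume "p \<in> splits w"
  then obtain a b where "p = (a, b)" "a @ b = w" by (auto simp: splits_def)
  then show "p \<in> (\<lambda>k. (take k w, drop k w)) ` {..length w}"
    by (intro image_eqI[of _ _ "length a"]) auto
qed (auto simp: splits_def)

lemma finite_splits [simp]: "finite (splits w)"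
  by (simp add: splits_eq_image)

lemma emult_eq_sum_splits: "emult f g w = (\<Sum>(a, b)\<in>splits w. f a * g b)"
proof -
  have "inj_on (\<lambda>k. (take k w, drop k w)) {..length w}"
    by (auto simp: inj_on_def) (metis min_absorb2 length_take)
  then show ?thesis
    unfolding emult_def splits_eq_image by (simp add: sum.reindex)
qed

lemma emult_assoc: "emult (emult f g) h = emult f (emult g h)"
proof (rule ext)
  fix w :: word
  let ?S3 = "{(a, b, c). a @ b @ c = w}"
  have "emult (emult f g) h w
      = (\<Sum>(p, q)\<in>Sigma (splits w) (\<lambda>p. splits (fst p)). f (fst q) * g (snd q) * h (snd p))"
    by (simp add: emult_eq_sum_splits case_prod_beta sum_distrib_right sum.Sigma)
  also have "\<dots> = (\<Sum>(a, b, c)\<in>?S3. f a * g b * h c)"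
    by (rule sum.reindex_bij_witness[where i = "\<lambda>(a, b, c). ((a @ b, c), (a, b))"
          and j = "\<lambda>((x, c), (a, b)). (a, b, c)"]) (auto simp: splits_def)
  also have "\<dots> = (\<Sum>(p, q)\<in>Sigma (splits w) (\<lambda>p. splits (snd p)). f (fst p) * g (fst q) * h (snd q))"
    by (rule sum.reindex_bij_witness[where i = "\<lambda>((a, x), (b, c)). (a, b, c)"
          and j = "\<lambda>(a, b, c). ((a, b @ c), (b, c))"]) (auto simp: splits_def)
  also have "\<dots> = emult f (emult g h) w"
    by (simp add: emult_eq_sum_splits case_prod_beta sum_distrib_left mult.assoc sum.Sigma)
  finally show "emult (emult f g) h w = emult f (emult g h) w" .
qed

lemma emult_mon_left:
  "emult (mon u) f w = (if take (length u) w = u then f (drop (length u) w) else 0)"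
proof -
  have "emult (mon u) f w = (\<Sum>k\<le>length w. if k = length u
      then (if take (length u) w = u then f (drop (length u) w) else 0) else 0)"
    unfolding emult_def mon_def by (rule sum.cong) auto
  then show ?thesis
    by (auto simp: sum.delta' dest: arg_cong[of _ _ length])
qed

lemma emult_mon_mon [simp]: "emult (mon a) (mon b) = mon (a @ b)"
proof (rule ext)
  fix w
  have "(w = a @ b) = (take (length a) w = a \<and> drop (length a) w = b)"
    by (metis append_eq_conv_conj)
  then show "emult (mon a) (mon b) w = mon (a @ b) w"
    by (subst emult_mon_left) (simp add: mon_def)
qed

lemma emult_mon_mon_assoc [simp]: "emult (mon a) (emult (mon b) f) = emult (mon (a @ b)) f"
  by (simp flip: emult_assoc)

lemma emult_mon_Nil_left [simp]: "emult (mon []) f = f"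
  by (rule ext) (simp add: emult_mon_left)

lemma emult_mon_Nil_right [simp]: "emult f (mon []) = f"
proof (rule ext)
  fix w
  have "emult f (mon []) w = (\<Sum>k\<le>length w. if k = length w then f w else 0)"
    unfolding emult_def mon_def by (rule sum.cong) auto
  then show "emult f (mon []) w = f w" by simp
qed

lemma emult_eadd_left [simp]: "emult (eadd f g) h = eadd (emult f h) (emult g h)"
  by (rule ext) (simp add: emult_def eadd_def sum.distrib ring_distribs)

lemma emult_eadd_right [simp]: "emult h (eadd f g) = eadd (emult h f) (emult h g)"
  by (rule ext) (simp add: emult_def eadd_def sum.distrib ring_distribs)

lemma emult_esub_left [simp]: "emult (esub f g) h = esub (emult f h) (emult g h)"
  by (rule ext) (simp add: emult_def esub_def sum_subtractf ring_distribs)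

lemma emult_esub_right [simp]: "emult h (esub f g) = esub (emult h f) (emult h g)"
  by (rule ext) (simp add: emult_def esub_def sum_subtractf ring_distribs)

lemma emult_esmult_left [simp]: "emult (esmult c f) h = esmult c (emult f h)"
  by (rule ext) (simp add: emult_def esmult_def sum_distrib_left mult.assoc)

lemma emult_esmult_right [simp]: "emult h (esmult c f) = esmult c (emult h f)"
  by (rule ext) (simp add: emult_def esmult_def sum_distrib_left mult.left_commute)

lemmas emult_distribs = emult_eadd_left emult_eadd_right emult_esub_left emult_esub_right
  emult_esmult_left emult_esmult_right

lemma emult_zero_left [simp]: "emult (\<lambda>w. 0) h = (\<lambda>w. 0)"
  by (rule ext) (simp add: emult_def)

lemma emult_zero_right [simp]: "emult h (\<lambda>w. 0) = (\<lambda>w. 0)"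
  by (rule ext) (simp add: emult_def)

lemma esub_self [simp]: "esub f f = (\<lambda>w. 0)"
  by (rule ext) (simp add: esub_def)

lemma esmult_one [simp]: "esmult 1 f = f"
  by (simp add: esmult_def)

lemma supp_mon [simp]: "supp (mon u :: 'k::field elt) = {u}"
  by (auto simp: supp_def mon_def)

lemma emult_nonzero_imp_append:
  assumes "emult f g w \<noteq> 0"
  obtains a b where "w = a @ b" "f a \<noteq> 0" "g b \<noteq> 0"
proof -
  have "\<exists>a b. w = a @ b \<and> f a \<noteq> 0 \<and> g b \<noteq> 0"
  proof (rule ccontr)
    assume "\<not> ?thesis"
    then have "(\<Sum>(a, b)\<in>splits w. f a * g b) = 0"
      by (intro sum.neutral) (auto simp: splits_def)
    with assms show False
      by (simp add: emult_eq_sum_splits)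
  qed
  with that show thesis by blast
qed

lemma finite_supp_emult:
  assumes "finite (supp f)" "finite (supp g)"
  shows "finite (supp (emult f g))"
proof (rule finite_subset)
  show "supp (emult f g) \<subseteq> (\<lambda>(a, b). a @ b) ` (supp f \<times> supp g)"
    by (auto simp: supp_def elim!: emult_nonzero_imp_append)
qed (use assms in simp)

definition esum :: "'a set \<Rightarrow> ('a \<Rightarrow> 'k::field elt) \<Rightarrow> 'k elt" where
  "esum V h = (\<lambda>w. \<Sum>v\<in>V. h v w)"

lemma emult_esum_left: "emult (esum V h) g = esum V (\<lambda>v. emult (h v) g)"
  by (rule ext) (simp add: emult_def esum_def sum_distrib_right sum.swap[of _ V])

lemma emult_esum_right: "emult g (esum V h) = esum V (\<lambda>v. emult g (h v))"
  by (rule ext) (simp add: emult_def esum_def sum_distrib_left sum.swap[of _ V])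

lemma elt_apply_eq_sum_mon: "finite (supp g) \<Longrightarrow> g w = (\<Sum>v\<in>supp g. g v * mon v w)"
  by (cases "w \<in> supp g") (auto simp: mon_def supp_def if_distrib sum.delta cong: if_cong)

lemma elt_eq_esum_mon: "finite (supp g) \<Longrightarrow> g = esum (supp g) (\<lambda>v. esmult (g v) (mon v))"
  by (rule ext) (simp add: esum_def esmult_def elt_apply_eq_sum_mon[symmetric])

lemma labels_Nil [simp]: "labels [] = []"
  and labels_Cons [simp]: "labels (x # u) = lab x @ labels u"
  and labels_append [simp]: "labels (a @ b) = labels a @ labels b"
  by (simp_all add: labels_def)

lemma wdeg_Nil [simp]: "wdeg [] = 0"
  and wdeg_Cons [simp]: "wdeg (x # u) = ldeg x + wdeg u"
  and wdeg_append [simp]: "wdeg (a @ b) = wdeg a + wdeg b"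
  by (simp_all add: wdeg_def)

lemma inIdeal_esub: "inIdeal A R x \<Longrightarrow> inIdeal A R y \<Longrightarrow> inIdeal A R (esub x y)"
proof -
  assume "inIdeal A R x" "inIdeal A R y"
  moreover have "esub x y = eadd x (esmult (-1) y)"
    by (simp add: fun_eq_iff esub_def eadd_def esmult_def)
  ultimately show ?thesis
    by (simp add: inIdeal.add inIdeal.smult)
qed

lemma inIdeal_esum:
  "finite V \<Longrightarrow> (\<And>v. v \<in> V \<Longrightarrow> inIdeal A R (h v)) \<Longrightarrow> inIdeal A R (esum V h)"
proof (induction V rule: finite_induct)
  case empty
  have "esum {} h = (\<lambda>w. 0)" by (simp add: esum_def)
  then show ?case by (simp add: inIdeal.zero)
next
  case (insert x F)
  have "esum (insert x F) h = eadd (h x) (esum F h)"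
    using insert.hyps by (simp add: esum_def eadd_def fun_eq_iff)
  then show ?case
    using insert by (simp add: inIdeal.add)
qed

definition sandwich :: "word \<Rightarrow> 'k::field elt \<Rightarrow> word \<Rightarrow> 'k elt" where
  "sandwich u r v = emult (emult (mon u) r) (mon v)"

lemma sandwich_Nil_Nil [simp]: "sandwich [] r [] = r"
  by (simp add: sandwich_def)

lemma sandwich_sandwich [simp]: "sandwich u (sandwich a r b) v = sandwich (u @ a) r (b @ v)"
  by (simp add: sandwich_def emult_assoc)

lemma sandwich_eadd [simp]: "sandwich u (eadd x y) v = eadd (sandwich u x v) (sandwich u y v)"
  and sandwich_esub [simp]: "sandwich u (esub x y) v = esub (sandwich u x v) (sandwich u y v)"
  by (simp_all add: sandwich_def)

lemma inIdeal_sandwich: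
  "(r, S) \<in> R \<Longrightarrow> set u \<subseteq> A \<Longrightarrow> set v \<subseteq> A \<Longrightarrow> distinct (labels u @ labels v) \<Longrightarrow>
    set (labels u @ labels v) \<inter> S = {} \<Longrightarrow> inIdeal A R (sandwich u r v)"
  unfolding sandwich_def by (rule inIdeal.gen)

lemma inIdeal_emult_sandwich:
  assumes "(r, S) \<in> R" "set a \<subseteq> A" "set b \<subseteq> A" "finite (supp g)" "finite (supp h)"
    and "\<And>p q. p \<in> supp g \<Longrightarrow> q \<in> supp h \<Longrightarrow> set p \<subseteq> A \<and> set q \<subseteq> A \<and>
       distinct (labels p @ labels a @ labels b @ labels q) \<and>
       set (labels p @ labels a @ labels b @ labels q) \<inter> S = {}"
  shows "inIdeal A R (emult (emult g (sandwich a r b)) h)"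
proof -
  have "emult (emult g (sandwich a r b)) h = esum (supp g) (\<lambda>p. esum (supp h) (\<lambda>q.
      emult (emult (esmult (g p) (mon p)) (sandwich a r b)) (esmult (h q) (mon q))))"
    by (subst elt_eq_esum_mon[OF assms(4)], subst elt_eq_esum_mon[OF assms(5)],
        simp add: emult_esum_left emult_esum_right)
      (simp add: esum_def esmult_def fun_eq_iff sum_distrib_left sum.swap[of _ "supp h"] mult_ac)
  also have "\<dots> = esum (supp g) (\<lambda>p. esum (supp h) (\<lambda>q.
      esmult (h q) (esmult (g p) (sandwich (p @ a) r (b @ q)))))"
    by (simp add: sandwich_def emult_assoc)
  finally have expand: "emult (emult g (sandwich a r b)) h = esum (supp g) (\<lambda>p. esum (supp h) (\<lambda>q.
      esmult (h q) (esmult (g p) (sandwich (p @ a) r (b @ q)))))" .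
  have "inIdeal A R (esum (supp g) (\<lambda>p. esum (supp h) (\<lambda>q.
      esmult (h q) (esmult (g p) (sandwich (p @ a) r (b @ q))))))"
  proof (intro inIdeal_esum inIdeal.smult inIdeal_sandwich[OF assms(1)])
    fix p q assume "p \<in> supp g" "q \<in> supp h"
    with assms(6)[of p q] assms(2,3)
    show "set (p @ a) \<subseteq> A" "set (b @ q) \<subseteq> A" "distinct (labels (p @ a) @ labels (b @ q))"
      "set (labels (p @ a) @ labels (b @ q)) \<inter> S = {}"
      by auto
  qed (use assms(4,5) in auto)
  with expand show ?thesis by simp
qed

section \<open>The substitution \<open>l \<mapsto> [\<Delta>, m]\<close>\<close>

fun subst_letter :: "letter \<Rightarrow> 'k::field elt" where
  "subst_letter (LL i) = gcomm (mon [LD]) 1 (mon [LM i]) 0"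
| "subst_letter x = mon [x]"

lemma subst_letter_LL: "subst_letter (LL i) = esub (mon [LD, LM i]) (mon [LM i, LD])"
  by (simp add: gcomm_def)

declare subst_letter.simps(1) [simp del]

fun subst_word :: "word \<Rightarrow> 'k::field elt" where
  "subst_word [] = mon []"
| "subst_word (x # u) = emult (subst_letter x) (subst_word u)"

lemma subst_word_append: "subst_word (a @ b) = emult (subst_word a) (subst_word b)"
  by (induction a) (simp_all add: emult_assoc)

lemma subst_word_alph2: "set u \<subseteq> alph2 \<Longrightarrow> subst_word u = (mon u :: 'k::field elt)"
proof (induction u)
  case (Cons x u)
  then have "subst_letter x = (mon [x] :: 'k elt)"
    by (cases x) (auto simp: alph2_def)
  with Cons show ?case by simp
qed simp

definition source_letters :: "word \<Rightarrow> letter set" where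
  "source_letters w = set w \<union> {LL i | i. LM i \<in> set w}"

definition source_words :: "word \<Rightarrow> word set" where
  "source_words w = {u. set u \<subseteq> source_letters w \<and> length u \<le> length w}"

lemma finite_source_letters: "finite (source_letters w)"
proof -
  have "{LL i | i. LM i \<in> set w} \<subseteq> (\<lambda>x. case x of LM i \<Rightarrow> LL i | y \<Rightarrow> y) ` set w"
    by (auto intro: rev_image_eqI)
  then show ?thesis
    unfolding source_letters_def by (simp add: finite_subset)
qed

lemma finite_source_words: "finite (source_words w)"
  unfolding source_words_def by (rule finite_lists_length_le[OF finite_source_letters])

lemma source_words_mono:
  assumes "set a \<subseteq> set b" "length a \<le> length b"
  shows "source_words a \<subseteq> source_words b"
proof -
  have "source_letters a \<subseteq> source_letters b"
    using assms(1) by (auto simp: source_letters_def)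
  then show ?thesis
    using assms(2) by (auto simp: source_words_def)
qed

lemma subst_letter_nonzero:
  "(subst_letter x a :: 'k::field) \<noteq> 0 \<Longrightarrow> (x = LD \<and> a = [LD]) \<or> (\<exists>i. x = LM i \<and> a = [LM i]) \<or>
    (\<exists>i. x = LL i \<and> (a = [LD, LM i] \<or> a = [LM i, LD]))"
  by (cases x) (auto simp: subst_letter_LL mon_def esub_def split: if_splits)

lemma subst_word_nonzero:
  "(subst_word u w :: 'k::field) \<noteq> 0 \<Longrightarrow> u \<in> source_words w \<and> labels w = labels u \<and>
    wdeg w = wdeg u \<and> set w \<subseteq> alph2"
proof (induction u arbitrary: w)
  case Nil
  then show ?case by (simp add: mon_def source_words_def split: if_splits)
next
  case (Cons x u)
  then have "emult (subst_letter x) (subst_word u) w \<noteq> (0 :: 'k)" by simp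
  then obtain a b where ab: "w = a @ b" "(subst_letter x a :: 'k) \<noteq> 0" "(subst_word u b :: 'k) \<noteq> 0"
    by (rule emult_nonzero_imp_append)
  have "x \<in> source_letters a \<and> 1 \<le> length a \<and> labels a = lab x \<and> wdeg a = ldeg x \<and> set a \<subseteq> alph2"
    using subst_letter_nonzero[OF ab(2)] by (auto simp: source_letters_def alph2_def)
  moreover have "source_letters a \<union> source_letters b = source_letters w"
    using ab(1) by (auto simp: source_letters_def)
  ultimately show ?case
    using Cons.IH[OF ab(3)] ab(1) by (auto simp: source_words_def)
qed

lemma in_supp_subst_word:
  "q \<in> supp (subst_word u :: 'k::field elt) \<Longrightarrow> labels q = labels u \<and> set q \<subseteq> alph2"
  using subst_word_nonzero by (auto simp: supp_def)

lemma finite_supp_subst_word: "finite (supp (subst_word u :: 'k::field elt))"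
proof (induction u)
  case (Cons x u)
  have "finite (supp (subst_letter x :: 'k elt))"
  proof (rule finite_subset)
    show "supp (subst_letter x) \<subseteq> {[x], [LD, LM (hd (lab x))], [LM (hd (lab x)), LD]}"
      using subst_letter_nonzero by (fastforce simp: supp_def)
  qed simp
  with Cons show ?case by (simp add: finite_supp_emult)
qed simp

text \<open>Only words of the finite set \<^term>\<open>source_words w\<close> contribute to the coefficient of
  \<^term>\<open>w\<close> (\<open>subst_word_nonzero\<close>).  Summing over it defines the substitution on all coefficient
  functions, so that it is linear and multiplicative without finite-support hypotheses.\<close>

definition subst_elt :: "'k::field elt \<Rightarrow> 'k elt" where
  "subst_elt f = (\<lambda>w. \<Sum>u\<in>source_words w. f u * subst_word u w)"

lemma subst_elt_eq_sum:
  fixes f :: "'k::field elt"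
  assumes "finite S" "\<And>u. f u * subst_word u w \<noteq> 0 \<Longrightarrow> u \<in> S"
  shows "subst_elt f w = (\<Sum>u\<in>S. f u * subst_word u w)"
proof -
  have "subst_elt f w = (\<Sum>u\<in>source_words w \<inter> S. f u * subst_word u w)"
    unfolding subst_elt_def
    by (rule sum.mono_neutral_right[OF finite_source_words]) (auto intro: assms(2))
  also have "\<dots> = (\<Sum>u\<in>S. f u * subst_word u w)"
    by (rule sum.mono_neutral_left[OF assms(1)]) (auto dest: subst_word_nonzero)
  finally show ?thesis .
qed

lemma subst_elt_nonzero:
  fixes f :: "'k::field elt"
  assumes "subst_elt f w \<noteq> 0"
  obtains u where "f u \<noteq> 0" "(subst_word u w :: 'k) \<noteq> 0"
proof -
  have "\<exists>u. f u * subst_word u w \<noteq> 0"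
    using assms sum.neutral[of "source_words w" "\<lambda>u. f u * subst_word u w"]
    unfolding subst_elt_def by blast
  with that show thesis by auto
qed

lemma subst_elt_mon [simp]: "subst_elt (mon v) = (subst_word v :: 'k::field elt)"
proof (rule ext)
  fix w
  have "subst_elt (mon v) w = (\<Sum>u\<in>{v}. mon v u * subst_word u w)"
    by (rule subst_elt_eq_sum) (auto simp: mon_def split: if_splits)
  then show "subst_elt (mon v) w = subst_word v w"
    by (simp add: mon_def)
qed

lemma subst_elt_eadd [simp]: "subst_elt (eadd f g) = eadd (subst_elt f) (subst_elt g)"
  by (rule ext) (simp add: subst_elt_def eadd_def sum.distrib ring_distribs)

lemma subst_elt_esub [simp]: "subst_elt (esub f g) = esub (subst_elt f) (subst_elt g)"
  by (rule ext) (simp add: subst_elt_def esub_def sum_subtractf ring_distribs)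

lemma subst_elt_esmult [simp]: "subst_elt (esmult c f) = esmult c (subst_elt f)"
  by (rule ext) (simp add: subst_elt_def esmult_def sum_distrib_left mult.assoc)

lemma subst_elt_zero [simp]: "subst_elt (\<lambda>w. 0) = (\<lambda>w. 0)"
  by (rule ext) (simp add: subst_elt_def)

lemma subst_elt_emult_eq_sum:
  fixes f g :: "'k::field elt" and w :: word
  defines "Q \<equiv> source_words w"
  shows "subst_elt (emult f g) w = (\<Sum>(p, q)\<in>Q \<times> Q. f p * g q * subst_word (p @ q) w)"
proof -
  have "subst_elt (emult f g) w = (\<Sum>(u, p, q)\<in>Sigma Q splits. f p * g q * subst_word u w)"
    unfolding subst_elt_def emult_eq_sum_splits Q_def
    by (simp add: sum_distrib_right case_prod_beta sum.Sigma finite_source_words)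
  also have "\<dots> = (\<Sum>(p, q)\<in>{(p, q). p @ q \<in> Q}. f p * g q * subst_word (p @ q) w)"
    by (rule sum.reindex_bij_witness[where i = "\<lambda>(p, q). (p @ q, p, q)" and j = "\<lambda>(u, p, q). (p, q)"])
      (auto simp: splits_def)
  also have "\<dots> = (\<Sum>(p, q)\<in>Q \<times> Q. f p * g q * subst_word (p @ q) w)"
  proof (rule sum.mono_neutral_left)
    show "{(p, q). p @ q \<in> Q} \<subseteq> Q \<times> Q"
      by (auto simp: Q_def source_words_def)
    show "\<forall>x\<in>Q \<times> Q - {(p, q). p @ q \<in> Q}.
        (case x of (p, q) \<Rightarrow> f p * g q * subst_word (p @ q) w) = 0"
      using subst_word_nonzero unfolding Q_def by fastforce
  qed (simp add: Q_def finite_source_words)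
  finally show ?thesis .
qed

lemma emult_subst_elt_eq_sum:
  fixes f g :: "'k::field elt" and w :: word
  defines "Q \<equiv> source_words w"
  shows "emult (subst_elt f) (subst_elt g) w = (\<Sum>(p, q)\<in>Q \<times> Q. f p * g q * subst_word (p @ q) w)"
proof -
  have subst_elt_split: "subst_elt h a = (\<Sum>p\<in>Q. h p * subst_word p a)"
    if "set a \<subseteq> set w" "length a \<le> length w" for h :: "'k elt" and a
  proof (rule subst_elt_eq_sum)
    fix p assume "h p * subst_word p a \<noteq> 0"
    then show "p \<in> Q"
      using subst_word_nonzero[of p a] source_words_mono[OF that] by (auto simp: Q_def)
  qed (simp add: Q_def finite_source_words)
  have "emult (subst_elt f) (subst_elt g) w
      = (\<Sum>(a, b)\<in>splits w. (\<Sum>p\<in>Q. f p * subst_word p a) * (\<Sum>q\<in>Q. g q * subst_word q b))"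
    unfolding emult_eq_sum_splits
    by (rule sum.cong) (auto simp: splits_def intro!: arg_cong2[where f = times] subst_elt_split)
  also have "\<dots> = (\<Sum>(a, b)\<in>splits w. \<Sum>(p, q)\<in>Q \<times> Q.
      f p * g q * (subst_word p a * subst_word q b))"
    by (simp add: sum_product sum.cartesian_product case_prod_beta mult_ac)
  also have "\<dots> = (\<Sum>(p, q)\<in>Q \<times> Q.
      f p * g q * (\<Sum>(a, b)\<in>splits w. subst_word p a * subst_word q b))"
    by (simp only: split_def sum_distrib_left) (rule sum.swap)
  also have "\<dots> = (\<Sum>(p, q)\<in>Q \<times> Q. f p * g q * subst_word (p @ q) w)"
    by (simp add: subst_word_append emult_eq_sum_splits)
  finally show ?thesis .
qed

lemma subst_elt_emult: "subst_elt (emult f g) = emult (subst_elt f) (subst_elt (g :: 'k::field elt))"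
  by (rule ext) (simp only: subst_elt_emult_eq_sum emult_subst_elt_eq_sum)

lemma subst_elt_gcomm [simp]: "subst_elt (gcomm x dx y dy) = gcomm (subst_elt x) dx (subst_elt y) dy"
  by (simp add: gcomm_def subst_elt_emult)

lemma inj_relab_letter: "inj t \<Longrightarrow> inj (relab_letter t)"
  unfolding inj_def
proof (intro allI impI)
  fix x y assume "\<forall>x y. t x = t y \<longrightarrow> x = y" "relab_letter t x = relab_letter t y"
  then show "x = y" by (cases x; cases y) auto
qed

lemma mon_map_apply: "inj \<sigma> \<Longrightarrow> (mon (map \<sigma> v) (map \<sigma> a) :: 'k::field) = mon v a"
  by (simp add: mon_def inj_map_eq_map)

lemma subst_letter_relab_apply:
  assumes "inj t"
  shows "(subst_letter (relab_letter t x) (map (relab_letter t) a) :: 'k::field) = subst_letter x a"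
proof -
  have m: "mon (map (relab_letter t) v) (map (relab_letter t) a) = (mon v a :: 'k)" for v
    using mon_map_apply[OF inj_relab_letter[OF assms]] .
  show ?thesis
  proof (cases x)
    case (LL i)
    with m[of "[LD, LM i]"] m[of "[LM i, LD]"] show ?thesis
      by (simp add: subst_letter_LL esub_def)
  qed (use m[of "[x]"] in simp_all)
qed

lemma subst_word_relab_apply:
  assumes "inj t"
  shows "(subst_word (map (relab_letter t) u) (map (relab_letter t) w) :: 'k::field) = subst_word u w"
proof (induction u arbitrary: w)
  case Nil
  show ?case using mon_map_apply[OF inj_relab_letter[OF assms], of "[]" w] by simp
next
  case (Cons x u)
  then show ?case
    by (simp add: emult_def take_map drop_map subst_letter_relab_apply[OF assms])
qed

lemma subst_elt_relabel:
  assumes "bij s"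
  shows "subst_elt (relabel s f) = relabel s (subst_elt (f :: 'k::field elt))"
proof (rule ext)
  fix w
  define \<sigma> where "\<sigma> = relab_letter (inv s)"
  define \<tau> where "\<tau> = relab_letter s"
  have inj_inv: "inj (inv s)"
    using assms bij_imp_bij_inv bij_is_inj by blast
  have \<sigma>_\<tau>: "map \<sigma> (map \<tau> u) = u" for u
  proof -
    have "\<sigma> (\<tau> x) = x" for x
      unfolding \<sigma>_def \<tau>_def using assms by (cases x) (simp_all add: bij_is_inj)
    then show ?thesis by (induction u) simp_all
  qed
  have inj_map_\<sigma>: "inj (map \<sigma>)"
    unfolding \<sigma>_def by (simp add: inj_relab_letter[OF inj_inv] inj_mapI)
  have subst_word_\<sigma>: "subst_word (map \<sigma> u) (map \<sigma> w) = (subst_word u w :: 'k)" for u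
    unfolding \<sigma>_def by (rule subst_word_relab_apply[OF inj_inv])
  have "subst_elt (relabel s f) w
      = (\<Sum>u\<in>source_words w. f (map \<sigma> u) * subst_word (map \<sigma> u) (map \<sigma> w))"
    unfolding subst_elt_def relabel_def \<sigma>_def[symmetric] by (simp add: subst_word_\<sigma>)
  also have "\<dots> = (\<Sum>u\<in>map \<sigma> ` source_words w. f u * subst_word u (map \<sigma> w))"
    by (simp add: sum.reindex inj_on_subset[OF inj_map_\<sigma>])
  also have "\<dots> = subst_elt f (map \<sigma> w)"
  proof (rule subst_elt_eq_sum[symmetric])
    fix u assume "f u * subst_word u (map \<sigma> w) \<noteq> 0"
    then have "subst_word (map \<tau> u) w \<noteq> (0 :: 'k)"
      using subst_word_\<sigma>[of "map \<tau> u"] unfolding \<sigma>_\<tau> by simp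
    then have "map \<tau> u \<in> source_words w"
      using subst_word_nonzero by blast
    then show "u \<in> map \<sigma> ` source_words w"
      using \<sigma>_\<tau> by (metis image_eqI)
  qed (simp add: finite_source_words)
  also have "\<dots> = relabel s (subst_elt f) w"
    by (simp add: relabel_def \<sigma>_def)
  finally show "subst_elt (relabel s f) w = relabel s (subst_elt f) w" .
qed

lemma homdeg_subst_elt: "homdeg d f \<Longrightarrow> homdeg d (subst_elt (f :: 'k::field elt))"
  unfolding homdeg_def by (metis subst_elt_nonzero subst_word_nonzero)

lemma inA_subst_elt: "inA alph1 I f \<Longrightarrow> inA alph2 I (subst_elt (f :: 'k::field elt))"
proof -
  assume f: "inA alph1 I f"
  have "supp (subst_elt f) \<subseteq> (\<Union>u\<in>supp f. supp (subst_word u :: 'k elt))"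
    by (auto simp: supp_def elim: subst_elt_nonzero)
  moreover have "finite (supp f)"
    using f by (simp add: inA_def supp_def)
  then have "finite (\<Union>u\<in>supp f. supp (subst_word u :: 'k elt))"
    by (simp add: finite_supp_subst_word)
  ultimately have "finite (supp (subst_elt f))"
    by (rule finite_subset)
  moreover have "set w \<subseteq> alph2 \<and> distinct (labels w) \<and> set (labels w) = I"
    if "subst_elt f w \<noteq> 0" for w
  proof -
    obtain u where "f u \<noteq> 0" "(subst_word u w :: 'k) \<noteq> 0"
      using \<open>subst_elt f w \<noteq> 0\<close> by (rule subst_elt_nonzero)
    then show ?thesis
      using f subst_word_nonzero by (fastforce simp: inA_def)
  qed
  ultimately show ?thesis
    by (simp add: inA_def supp_def)
qed

lemma subst_elt_alph2: "inA alph2 I y \<Longrightarrow> subst_elt y = (y :: 'k::field elt)"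
proof (rule ext)
  fix w assume y: "inA alph2 I y"
  have "subst_elt y w = (\<Sum>u\<in>{w}. y u * subst_word u w)"
  proof (rule subst_elt_eq_sum)
    fix u assume nz: "y u * subst_word u w \<noteq> 0"
    with y have "subst_word u = (mon u :: 'k elt)"
      by (auto simp: inA_def intro: subst_word_alph2)
    with nz show "u \<in> {w}" by (auto simp: mon_def split: if_splits)
  qed simp
  also have "\<dots> = y w"
    using y subst_word_alph2[where 'k = 'k] by (auto simp: inA_def mon_def)
  finally show "subst_elt y w = y w" .
qed

lemma taa_morphism_subst_elt: "taa_morphism alph1 alph2 (subst_elt :: 'k::field elt \<Rightarrow> 'k elt)"
  unfolding taa_morphism_def
  by (auto simp: subst_elt_emult subst_elt_relabel homdeg_subst_elt inA_subst_elt)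

lemma taa_morphism_id: "A \<subseteq> B \<Longrightarrow> taa_morphism A B (id :: 'k::field elt \<Rightarrow> 'k elt)"
  unfolding taa_morphism_def inA_def by force

section \<open>Comparison of the ideals\<close>

definition l_relator :: "nat \<Rightarrow> 'k::field elt" where
  "l_relator i = esub (subst_letter (LL i)) (mon [LL i])"

lemma l_relator_in_Rel1: "(l_relator i, {i}) \<in> Rel1"
  by (auto simp: Rel1_def l_relator_def subst_letter.simps(1))

lemma inIdeal_sandwich_subst_word_diff:
  "distinct (labels (p @ u)) \<Longrightarrow>
    inIdeal alph1 Rel1 (sandwich p (esub (subst_word u) (mon u)) [] :: 'k::field elt)"
proof (induction u arbitrary: p)
  case Nil
  then show ?case by (simp add: sandwich_def inIdeal.zero)
next
  case (Cons a u)
  let ?D = "esub (subst_word u) (mon u) :: 'k elt"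
  have IH: "inIdeal alph1 Rel1 (sandwich (p @ [a]) ?D [])"
    using Cons.IH[of "p @ [a]"] Cons.prems by simp
  have sandwich_D: "sandwich [a] ?D [] = esub (emult (mon [a]) (subst_word u)) (mon (a # u))"
    by (simp add: sandwich_def)
  show ?case
  proof (cases "\<exists>i. a = LL i")
    case True
    then obtain i where a: "a = LL i" ..
    let ?E = "l_relator i :: 'k elt"
    have telescope: "esub (subst_word (a # u)) (mon (a # u)) = eadd (emult ?E (subst_word u)) (sandwich [a] ?D [])"
      unfolding sandwich_D l_relator_def unfolding a by simp (simp add: fun_eq_iff esub_def eadd_def)
    have head: "sandwich p (emult ?E (subst_word u)) [] = emult (emult (mon p) (sandwich [] ?E [])) (subst_word u)"
      by (simp add: sandwich_def emult_assoc)
    have "inIdeal alph1 Rel1 (emult (emult (mon p) (sandwich [] ?E [])) (subst_word u))"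
      by (rule inIdeal_emult_sandwich[OF l_relator_in_Rel1])
        (use Cons.prems a in \<open>auto simp: alph1_def finite_supp_subst_word dest!: in_supp_subst_word\<close>)
    with IH show ?thesis
      unfolding telescope by (simp only: sandwich_eadd sandwich_sandwich append_Nil head) (rule inIdeal.add)
  next
    case False
    then have "subst_letter a = (mon [a] :: 'k elt)"
      by (cases a) auto
    then have "esub (subst_word (a # u)) (mon (a # u)) = sandwich [a] ?D []"
      unfolding sandwich_D by simp
    with IH show ?thesis by simp
  qed
qed

lemma inIdeal_subst_elt_diff:
  assumes "inA alph1 I x"
  shows "inIdeal alph1 Rel1 (esub (subst_elt x) (x :: 'k::field elt))"
proof -
  have fin: "finite (supp x)"
    using assms by (simp add: inA_def supp_def)
  have "esub (subst_elt x) x = esum (supp x) (\<lambda>u. esmult (x u) (esub (subst_word u) (mon u)))"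
  proof (rule ext)
    fix w
    have "subst_elt x w = (\<Sum>u\<in>supp x. x u * subst_word u w)"
      by (rule subst_elt_eq_sum[OF fin]) (auto simp: supp_def)
    then show "esub (subst_elt x) x w = esum (supp x) (\<lambda>u. esmult (x u) (esub (subst_word u) (mon u))) w"
      using elt_apply_eq_sum_mon[OF fin, of w]
      by (simp add: esub_def esum_def esmult_def sum_subtractf right_diff_distrib)
  qed
  moreover have "inIdeal alph1 Rel1 (esub (subst_word u) (mon u) :: 'k elt)" if "u \<in> supp x" for u
    using inIdeal_sandwich_subst_word_diff[of "[]" u] assms that by (simp add: inA_def supp_def)
  ultimately show ?thesis
    using fin by (simp add: inIdeal_esum inIdeal.smult)
qed

lemma subst_elt_Delta_l_comm:
  "subst_elt (gcomm (mon [LD]) 1 (mon [LL i]) 1) =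
    esub (sandwich [] (mon [LD, LD]) [LM i]) (sandwich [LM i] (mon [LD, LD]) [] :: 'k::field elt)"
  by (simp add: gcomm_def sandwich_def subst_elt_emult subst_letter_LL)
    (simp add: fun_eq_iff esub_def eadd_def esmult_def mon_def)

lemma subst_elt_l_l_comm:
  fixes i j :: nat
  defines "T \<equiv> gcomm (subst_letter (LL i)) 1 (mon [LM j]) 0 :: 'k::field elt"
    and "DD \<equiv> mon [LD, LD] :: 'k elt"
  shows "subst_elt (gcomm (mon [LL i]) 1 (mon [LL j]) 1) =
    eadd (esmult (-1) (eadd (sandwich [LD] T []) (sandwich [] T [LD])))
      (esub (eadd (sandwich [] DD [LM i, LM j]) (sandwich [LM j, LM i] DD []))
        (eadd (sandwich [LM i] DD [LM j]) (sandwich [LM j] DD [LM i])))"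
  unfolding T_def DD_def
  by (simp add: gcomm_def sandwich_def subst_elt_emult subst_letter_LL)
    (simp add: fun_eq_iff esub_def eadd_def esmult_def mon_def)

lemma subst_elt_l_m_comm:
  "subst_elt (gcomm (mon [LL i]) 1 (mon [LM j]) 0) =
    (gcomm (subst_letter (LL i)) 1 (mon [LM j]) 0 :: 'k::field elt)"
  by (simp add: gcomm_def subst_elt_emult)

lemma gcomm_subst_LL_LM:
  "gcomm (subst_letter (LL i)) 1 (mon [LM j]) 0 =
    eadd (gcomm (mon [LL i]) 1 (mon [LM j]) 0)
      (esub (sandwich [] (l_relator i) [LM j]) (sandwich [LM j] (l_relator i) [] :: 'k::field elt))"
  by (simp add: gcomm_def sandwich_def subst_letter_LL l_relator_def)
    (simp add: fun_eq_iff esub_def eadd_def esmult_def mon_def)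

lemma inIdeal_emult_subst_word_sandwich:
  assumes "(r, S) \<in> Rel2" "set a \<subseteq> alph2" "set b \<subseteq> alph2"
    "distinct (labels u @ labels a @ labels b @ labels v)"
    "set (labels u @ labels a @ labels b @ labels v) \<inter> S = {}"
  shows "inIdeal alph2 Rel2 (emult (emult (subst_word u) (sandwich a r b)) (subst_word v) :: 'k::field elt)"
  by (rule inIdeal_emult_sandwich[OF assms(1-3) finite_supp_subst_word finite_supp_subst_word])
    (use assms(4,5) in \<open>auto dest!: in_supp_subst_word\<close>)

lemma Delta_square_in_Rel2: "(mon [LD, LD], {}) \<in> Rel2"
  and m_comm_in_Rel2: "i \<noteq> j \<Longrightarrow> (gcomm (mon [LM i]) 0 (mon [LM j]) 0, {i, j}) \<in> Rel2"
  and subst_l_m_comm_in_Rel2: "i \<noteq> j \<Longrightarrow> (gcomm (subst_letter (LL i)) 1 (mon [LM j]) 0, {i, j}) \<in> Rel2"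
  by (auto simp: Rel2_def subst_letter.simps(1))

lemma inIdeal_subst_elt_Rel1:
  assumes "(r, S) \<in> Rel1" "distinct (labels u @ labels v)" "set (labels u @ labels v) \<inter> S = {}"
  shows "inIdeal alph2 Rel2 (emult (emult (subst_word u) (subst_elt r)) (subst_word v) :: 'k::field elt)"
proof -
  have sandwiched: "inIdeal alph2 Rel2 (emult (emult (subst_word u) (sandwich a r' b)) (subst_word v) :: 'k elt)"
    if "(r', S') \<in> Rel2" "set a \<subseteq> alph2" "set b \<subseteq> alph2" "distinct (labels a @ labels b)"
      "set (labels a @ labels b) \<inter> S' = {}" "set (labels a @ labels b) \<union> S' \<subseteq> S" for a b r' S'
    by (rule inIdeal_emult_subst_word_sandwich[OF that(1-3)]) (use assms(2,3) that(4-6) in auto)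
  from assms(1) consider
      (Delta_sq) "r = mon [LD, LD]" "S = {}"
    | (m_m) i j where "r = gcomm (mon [LM i]) 0 (mon [LM j]) 0" "S = {i, j}" "i \<noteq> j"
    | (l_def) i where "r = esub (gcomm (mon [LD]) 1 (mon [LM i]) 0) (mon [LL i])"
    | (Delta_l) i where "r = gcomm (mon [LD]) 1 (mon [LL i]) 1" "S = {i}"
    | (l_m) i j where "r = gcomm (mon [LL i]) 1 (mon [LM j]) 0" "S = {i, j}" "i \<noteq> j"
    | (l_l) i j where "r = gcomm (mon [LL i]) 1 (mon [LL j]) 1" "S = {i, j}" "i \<noteq> j"
    unfolding Rel1_def by blast
  then show ?thesis
  proof cases
    case Delta_sq
    then show ?thesis
      using sandwiched[OF Delta_square_in_Rel2, of "[]" "[]"] by simp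
  next
    case (m_m i j)
    then show ?thesis
      using sandwiched[OF m_comm_in_Rel2, of i j "[]" "[]"] by simp
  next
    case (l_def i)
    then show ?thesis
      by (simp add: subst_letter.simps(1) inIdeal.zero)
  next
    case (Delta_l i)
    with sandwiched[OF Delta_square_in_Rel2] show ?thesis
      unfolding Delta_l(1) subst_elt_Delta_l_comm
      by (simp only: emult_distribs) (intro inIdeal_esub; simp add: alph2_def)
  next
    case (l_m i j)
    with sandwiched[OF subst_l_m_comm_in_Rel2, of i j "[]" "[]"] show ?thesis
      unfolding l_m(1) subst_elt_l_m_comm by simp
  next
    case (l_l i j)
    with sandwiched[OF Delta_square_in_Rel2] sandwiched[OF subst_l_m_comm_in_Rel2] show ?thesis
      unfolding l_l(1) subst_elt_l_l_comm
      by (simp only: emult_distribs) (intro inIdeal.add inIdeal.smult inIdeal_esub; simp add: alph2_def)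
  qed
qed

lemma inIdeal_subst_elt: "inIdeal alph1 Rel1 x \<Longrightarrow> inIdeal alph2 Rel2 (subst_elt (x :: 'k::field elt))"
proof (induction rule: inIdeal.induct)
  case (gen r S u v)
  then show ?case
    using inIdeal_subst_elt_Rel1[OF gen(1,4,5)] by (simp add: subst_elt_emult)
qed (simp_all add: inIdeal.zero inIdeal.add inIdeal.smult)

lemma inIdeal_Rel2_imp_Rel1: "inIdeal alph2 Rel2 y \<Longrightarrow> inIdeal alph1 Rel1 (y :: 'k::field elt)"
proof (induction rule: inIdeal.induct)
  case (gen r S u v)
  have u_v: "set u \<subseteq> alph1" "set v \<subseteq> alph1"
    by (simp_all add: alph1_def)
  from gen.hyps(1) consider
      (Rel1) "(r, S) \<in> Rel1"
    | (l_m) i j where "r = gcomm (gcomm (mon [LD]) 1 (mon [LM i]) 0) 1 (mon [LM j]) 0"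
        "S = {i, j}" "i \<noteq> j"
    unfolding Rel2_def Rel1_def by blast
  then have "inIdeal alph1 Rel1 (sandwich u r v)"
  proof cases
    case Rel1
    then show ?thesis
      using u_v gen.hyps(4,5) by (rule inIdeal_sandwich)
  next
    case (l_m i j)
    have l_m_in_Rel1: "(gcomm (mon [LL i]) 1 (mon [LM j]) 0, S) \<in> Rel1"
      unfolding Rel1_def using l_m(2,3) by blast
    from l_m(2,3) gen.hyps(4,5) show ?thesis
      unfolding l_m(1) subst_letter.simps(1)[symmetric] gcomm_subst_LL_LM
      by (simp only: sandwich_eadd sandwich_esub sandwich_sandwich)
        (intro inIdeal.add inIdeal_esub inIdeal_sandwich[OF l_m_in_Rel1]
          inIdeal_sandwich[OF l_relator_in_Rel1]; auto simp: alph1_def)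
  qed
  then show ?case
    by (simp add: sandwich_def)
qed (simp_all add: inIdeal.zero inIdeal.add inIdeal.smult)

theorem mainTheorem8:
  shows "taa_quot_iso alph1 (Rel1 :: ('k::field_char_0 elt \<times> nat set) set) alph2 Rel2"
  unfolding taa_quot_iso_def
proof (intro exI conjI allI impI)
  show "taa_morphism alph1 alph2 (subst_elt :: 'k elt \<Rightarrow> 'k elt)"
    by (rule taa_morphism_subst_elt)
  show "taa_morphism alph2 alph1 (id :: 'k elt \<Rightarrow> 'k elt)"
    by (rule taa_morphism_id) (simp add: alph1_def)
next
  fix I and x :: "'k elt"
  assume "inIdeal alph1 Rel1 x"
  then show "inIdeal alph2 Rel2 (subst_elt x)"
    by (rule inIdeal_subst_elt)
next
  fix I and y :: "'k elt"
  assume "inIdeal alph2 Rel2 y"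
  then show "inIdeal alph1 Rel1 (id y)"
    by (simp add: inIdeal_Rel2_imp_Rel1)
next
  fix I and x :: "'k elt"
  assume "inA alph1 I x"
  then show "inIdeal alph1 Rel1 (esub (id (subst_elt x)) x)"
    by (simp add: inIdeal_subst_elt_diff)
next
  fix I and y :: "'k elt"
  assume "inA alph2 I y"
  then show "inIdeal alph2 Rel2 (esub (subst_elt (id y)) y)"
    by (simp add: subst_elt_alph2 inIdeal.zero)
qed

end
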